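(* Let $M$ be a regular $po$-$\Gamma$-semigroup. Then for every fuzzy right ideal $f$ of $M$ and every fuzzy subset $g$ of $M$, we have $f\wedge g\preceq f\circ g$.
   Context: Let $M$ and $\Gamma$ be nonempty sets with a map $M\times\Gamma\times M\to M$, $(a,\gamma,b)\mapsto a\gamma b$, satisfying $(a\gamma b)\mu c=a\gamma(b\mu c)$ for all $a,b,c\in M$, $\gamma,\mu\in\Gamma$. A $po$-$\Gamma$-semigroup is such an $M$ with a partial order $\le$ such that $a\le b$ implies $a\gamma c\le b\gamma c$ and $c\gamma a\le c\gamma b$ for all $c\in M$, $\gamma\in\Gamma$. For $H\subseteq M$, $(H]=\{t\in M: t\le h \text{ for some } h\in H\}$; for subsets $A,B,C$, $A\Gamma B\Gamma C=\{a\gamma b\mu c: a\in A,b\in B,c\in C,\gamma,\mu\in\Gamma\}$ (elements are identified with singletons). $M$ is regular if $a\in(a\Gamma M\Gamma a]$ for every $a\in M$. A fuzzy subset of $M$ is a map $M\to[0,1]$. For $a\in M$ let $A_a=\{(y,z)\in M\times M: a\le y\gamma z \text{ for some }\gamma\in\Gamma\}$. $(f\circ g)(a)=\bigvee_{(y,z)\in A_a}\min\{f(y),g(z)\}$ if $A_a\ne\emptyset$, and $0$ otherwise. $(f\wedge g)(a)=\min\{f(a),g(a)\}$; $f\preceq g$ means $f(a)\le g(a)$ for all $a$. A fuzzy right ideal is a fuzzy subset $f$ with $f(x\gamma y)\ge f(x)$ for all $x,y\in M,\gamma\in\Gamma$, and $x\le y\Rightarrow f(x)\ge f(y)$. *)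

theory Defs
  imports Complex_Main
begin

text \<open>M is the type 'm, Gamma is the type 'g (types are nonempty).
  The ternary operation is mult a gamma b; le is the partial order.\<close>

definition gamma_semigroup :: "('m \<Rightarrow> 'g \<Rightarrow> 'm \<Rightarrow> 'm) \<Rightarrow> bool" where
  "gamma_semigroup mult \<longleftrightarrow>
     (\<forall>a b c \<gamma> \<mu>. mult (mult a \<gamma> b) \<mu> c = mult a \<gamma> (mult b \<mu> c))"

definition po_gamma_semigroup ::
  "('m \<Rightarrow> 'g \<Rightarrow> 'm \<Rightarrow> 'm) \<Rightarrow> ('m \<Rightarrow> 'm \<Rightarrow> bool) \<Rightarrow> bool" where
  "po_gamma_semigroup mult le \<longleftrightarrow>
     gamma_semigroup mult \<and>
     (\<forall>a. le a a) \<and>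
     (\<forall>a b. le a b \<and> le b a \<longrightarrow> a = b) \<and>
     (\<forall>a b c. le a b \<and> le b c \<longrightarrow> le a c) \<and>
     (\<forall>a b c \<gamma>. le a b \<longrightarrow> le (mult a \<gamma> c) (mult b \<gamma> c) \<and> le (mult c \<gamma> a) (mult c \<gamma> b))"

definition down :: "('m \<Rightarrow> 'm \<Rightarrow> bool) \<Rightarrow> 'm set \<Rightarrow> 'm set" where
  "down le H = {t. \<exists>h\<in>H. le t h}"

definition triple_prod :: "('m \<Rightarrow> 'g \<Rightarrow> 'm \<Rightarrow> 'm) \<Rightarrow> 'm set \<Rightarrow> 'm set \<Rightarrow> 'm set \<Rightarrow> 'm set" where
  "triple_prod mult A B C = {mult (mult a \<gamma> b) \<mu> c | a b c \<gamma> \<mu>. a \<in> A \<and> b \<in> B \<and> c \<in> C}"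

definition regular_po ::
  "('m \<Rightarrow> 'g \<Rightarrow> 'm \<Rightarrow> 'm) \<Rightarrow> ('m \<Rightarrow> 'm \<Rightarrow> bool) \<Rightarrow> bool" where
  "regular_po mult le \<longleftrightarrow> (\<forall>a. a \<in> down le (triple_prod mult {a} UNIV {a}))"

definition fuzzy_subset :: "('m \<Rightarrow> real) \<Rightarrow> bool" where
  "fuzzy_subset f \<longleftrightarrow> (\<forall>x. 0 \<le> f x \<and> f x \<le> 1)"

definition A_set :: "('m \<Rightarrow> 'g \<Rightarrow> 'm \<Rightarrow> 'm) \<Rightarrow> ('m \<Rightarrow> 'm \<Rightarrow> bool) \<Rightarrow> 'm \<Rightarrow> ('m \<times> 'm) set" where
  "A_set mult le a = {(y, z). \<exists>\<gamma>. le a (mult y \<gamma> z)}"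

definition fuzzy_comp ::
  "('m \<Rightarrow> 'g \<Rightarrow> 'm \<Rightarrow> 'm) \<Rightarrow> ('m \<Rightarrow> 'm \<Rightarrow> bool) \<Rightarrow> ('m \<Rightarrow> real) \<Rightarrow> ('m \<Rightarrow> real) \<Rightarrow> 'm \<Rightarrow> real" where
  "fuzzy_comp mult le f g a =
     (if A_set mult le a = {} then 0
      else (SUP p\<in>A_set mult le a. min (f (fst p)) (g (snd p))))"

definition fuzzy_meet :: "('m \<Rightarrow> real) \<Rightarrow> ('m \<Rightarrow> real) \<Rightarrow> 'm \<Rightarrow> real" where
  "fuzzy_meet f g a = min (f a) (g a)"

definition fuzzy_le :: "('m \<Rightarrow> real) \<Rightarrow> ('m \<Rightarrow> real) \<Rightarrow> bool" where
  "fuzzy_le f g \<longleftrightarrow> (\<forall>a. f a \<le> g a)"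

definition fuzzy_right_ideal ::
  "('m \<Rightarrow> 'g \<Rightarrow> 'm \<Rightarrow> 'm) \<Rightarrow> ('m \<Rightarrow> 'm \<Rightarrow> bool) \<Rightarrow> ('m \<Rightarrow> real) \<Rightarrow> bool" where
  "fuzzy_right_ideal mult le f \<longleftrightarrow> fuzzy_subset f \<and>
     (\<forall>x y \<gamma>. f (mult x \<gamma> y) \<ge> f x) \<and>
     (\<forall>x y. le x y \<longrightarrow> f x \<ge> f y)"

end

theory Submission
  imports Defs
begin

text \<open>Regularity gives \<open>a \<le> (a \<gamma> x) \<mu> a\<close>, so \<open>(a \<gamma> x, a) \<in> A\<^sub>a\<close>; since \<open>f\<close> is a
  right ideal, \<open>f (a \<gamma> x) \<ge> f a\<close>, whence
  \<open>min (f a) (g a) \<le> min (f (a \<gamma> x)) (g a) \<le> (f \<circ> g) a\<close>.\<close>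

lemma regular_po_A_set_witness:
  assumes "regular_po mult le"
  obtains x \<gamma> where "(mult a \<gamma> x, a) \<in> A_set mult le a"
proof -
  from assms have "a \<in> down le (triple_prod mult {a} UNIV {a})"
    unfolding regular_po_def by blast
  then obtain x \<gamma> \<mu> where "le a (mult (mult a \<gamma> x) \<mu> a)"
    unfolding down_def triple_prod_def by blast
  then show thesis
    using that unfolding A_set_def by blast
qed

lemma fuzzy_comp_ge:
  assumes "fuzzy_subset f" "fuzzy_subset g" "(y, z) \<in> A_set mult le a"
  shows "min (f y) (g z) \<le> fuzzy_comp mult le f g a"
proof -
  have "bdd_above ((\<lambda>p. min (f (fst p)) (g (snd p))) ` A_set mult le a)"
    using assms(1,2) unfolding fuzzy_subset_def
    by (intro bdd_aboveI[where M = 1]) (auto simp: min_le_iff_disj)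
  then have "min (f y) (g z) \<le> (SUP p\<in>A_set mult le a. min (f (fst p)) (g (snd p)))"
    using cSUP_upper[OF assms(3)] by fastforce
  then show ?thesis
    using assms(3) unfolding fuzzy_comp_def by auto
qed

theorem lemma8:
  fixes mult :: "'m \<Rightarrow> 'g \<Rightarrow> 'm \<Rightarrow> 'm" and le :: "'m \<Rightarrow> 'm \<Rightarrow> bool"
  assumes "po_gamma_semigroup mult le"
    and "regular_po mult le"
  shows "\<forall>f g. fuzzy_right_ideal mult le f \<and> fuzzy_subset g \<longrightarrow>
           fuzzy_le (fuzzy_meet f g) (fuzzy_comp mult le f g)"
proof (intro allI impI)
  fix f g :: "'m \<Rightarrow> real"
  assume "fuzzy_right_ideal mult le f \<and> fuzzy_subset g"
  then have f: "fuzzy_subset f" "\<And>x y \<gamma>. f x \<le> f (mult x \<gamma> y)" and g: "fuzzy_subset g"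
    unfolding fuzzy_right_ideal_def by auto
  show "fuzzy_le (fuzzy_meet f g) (fuzzy_comp mult le f g)"
    unfolding fuzzy_le_def fuzzy_meet_def
  proof
    fix a
    obtain x \<gamma> where A: "(mult a \<gamma> x, a) \<in> A_set mult le a"
      using regular_po_A_set_witness[OF assms(2)] .
    have "min (f a) (g a) \<le> min (f (mult a \<gamma> x)) (g a)"
      using f(2) by (auto simp: min_le_iff_disj)
    also have "\<dots> \<le> fuzzy_comp mult le f g a"
      using fuzzy_comp_ge[OF f(1) g A] .
    finally show "min (f a) (g a) \<le> fuzzy_comp mult le f g a" .
  qed
qed

end
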